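(* For a function $F(s,r,\boldsymbol t,\bar{\boldsymbol t})$, the system of six dispersionless Hirota equations (dH1a),(dH1b),(dH2a),(dH2b),(dH3a),(dH3b) is equivalent to the system consisting of (dH1b),(dH2b),(dH3b) together with (dH1c),(dH2c),(dH3c).
   Context: $F=F(s,r,\boldsymbol t,\bar{\boldsymbol t})$ is a smooth function of continuous variables $s,r$ and $\boldsymbol t=(t_1,t_2,\dots)$, $\bar{\boldsymbol t}=(\bar t_1,\bar t_2,\dots)$. $D(z)=\sum_{n\ge1}\frac{z^{-n}}{n}\partial_{t_n}$, $\bar D(z)=\sum_{n\ge1}\frac{z^n}{n}\partial_{\bar t_n}$; identities are understood as formal series in $\lambda^{-1},\mu^{-1}$ (when $D$ appears) and $\lambda,\mu$ (when $\bar D$ appears), for parameters $\lambda\ne\mu$. The equations are: (dH1a) $e^{D(\lambda)D(\mu)F}=\frac{\lambda e^{-\partial_rD(\lambda)F}-\mu e^{-\partial_rD(\mu)F}}{\lambda-\mu}+\frac1{\lambda\mu}e^{(\partial_s+D(\lambda))(\partial_s+D(\mu))F+\partial_r\partial_sF}$; (dH1b) $e^{D(\lambda)D(\mu)F}=\frac{\lambda e^{-\partial_sD(\lambda)F}-\mu e^{-\partial_sD(\mu)F}}{\lambda-\mu}+\frac1{\lambda\mu}e^{(\partial_r+D(\lambda))(\partial_r+D(\mu))F+\partial_r\partial_sF}$; (dH2a) $e^{\bar D(\lambda)\bar D(\mu)F}=\frac{\lambda^{-1}e^{-\partial_r\bar D(\lambda)F}-\mu^{-1}e^{-\partial_r\bar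 D(\mu)F}}{\lambda^{-1}-\mu^{-1}}+\lambda\mu\,e^{(-\partial_s+\bar D(\lambda))(-\partial_s+\bar D(\mu))F-\partial_r\partial_sF}$; (dH2b) $e^{\bar D(\lambda)\bar D(\mu)F}=\frac{\lambda^{-1}e^{\partial_s\bar D(\lambda)F}-\mu^{-1}e^{\partial_s\bar D(\mu)F}}{\lambda^{-1}-\mu^{-1}}+\lambda\mu\,e^{(\partial_r+\bar D(\lambda))(\partial_r+\bar D(\mu))F-\partial_r\partial_sF}$; (dH3a) $e^{D(\lambda)\bar D(\mu)F}=e^{-(\partial_r+\partial_s)\bar D(\mu)F}-\lambda\mu\,e^{-(\partial_rD(\lambda)+\partial_s\bar D(\mu)+\partial_r\partial_s)F}+\lambda\mu\,e^{(-\partial_s+D(\lambda))(-\partial_s+\bar D(\mu))F-(\partial_r+\partial_s)\partial_sF}$; (dH3b) $e^{D(\lambda)\bar D(\mu)F}=1-\frac{\mu}{\lambda}e^{\partial_s(\partial_s+D(\lambda)-\bar D(\mu))F}+\frac{\mu}{\lambda}e^{(\partial_r+D(\lambda))(\partial_r+\bar D(\mu))F}$; (dH1c) $\lambda(e^{-\partial_sD(\lambda)F}-e^{-\partial_rD(\lambda)F})+\lambda^{-1}(e^{\partial_s(\partial_r+\partial_s+D(\lambda))F}-e^{\partial_r(\partial_r+\partial_s+D(\lambda))F})=(\partial_r-\partial_s)\partial_{t_1}F$; (dH2c) $\lambda^{-1}(e^{\partial_s\bar D(\lambda)F}-e^{-\partial_r\bar D(\lambda)F})+\lambda(e^{-\partial_s(\partial_r-\partial_s+\bar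 D(\lambda))F}-e^{\partial_r(\partial_r-\partial_s+\bar D(\lambda))F})=(\partial_r+\partial_s)\partial_{\bar t_1}F$; (dH3c) $(\partial_r+\partial_s)\partial_{\bar t_1}F=e^{-\partial_r\partial_sF}(\partial_r-\partial_s)\partial_{t_1}F$. *)

theory Defs
  imports "HOL-Analysis.Analysis" "HOL-Computational_Algebra.Formal_Laurent_Series"
begin

text \<open>Independent variables: s, r, t_(n+1) (constructor Vt n), tbar_(n+1) (constructor Vtb n).
  So Vt 0 is t_1 and Vtb 0 is tbar_1.  A point is an assignment of reals to all variables.\<close>
datatype var = Vs | Vr | Vt nat | Vtb nat

type_synonym pt = "var \<Rightarrow> real"

definition pd :: "var \<Rightarrow> (pt \<Rightarrow> real) \<Rightarrow> pt \<Rightarrow> real" where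
  "pd v G p = deriv (\<lambda>h. G (p(v := p v + h))) 0"

fun ipd :: "var list \<Rightarrow> (pt \<Rightarrow> real) \<Rightarrow> pt \<Rightarrow> real" where
  "ipd [] G = G"
| "ipd (v # vs) G = pd v (ipd vs G)"

definition smooth_F :: "(pt \<Rightarrow> real) \<Rightarrow> bool" where
  "smooth_F F \<longleftrightarrow>
     (\<forall>vs v p. (\<lambda>h. ipd vs F (p(v := p v + h))) differentiable (at 0)) \<and>
     (\<forall>vs p V. finite V \<longrightarrow> continuous_on {q. \<forall>v. v \<notin> V \<longrightarrow> q v = p v} (ipd vs F))"

definition hess :: "(pt \<Rightarrow> real) \<Rightarrow> pt \<Rightarrow> var \<Rightarrow> var \<Rightarrow> real" where
  "hess F p v w = pd v (pd w F) p"

text \<open>Two-variable formal series are represented in the field  real fls fls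
  (Laurent series in an outer variable X whose coefficients are Laurent series in an inner
  variable Y).  In each equation, the first spectral parameter lambda corresponds to the outer
  variable and mu to the inner one: X = lambda^-1 (where D(lambda) occurs) or X = lambda
  (where Dbar(lambda) occurs), likewise Y = mu^-1 or Y = mu.\<close>

type_synonym ser = "real fls fls"

definition dser :: "(nat \<Rightarrow> 'a::field) \<Rightarrow> 'a fls" where
  "dser c = fps_to_fls (Abs_fps (\<lambda>n. if n = 0 then 0 else c (n - 1) / of_nat n))"

definition expN :: "'a::field_char_0 fls \<Rightarrow> 'a fls" where
  "expN f = fps_to_fls (Abs_fps (\<lambda>n. \<Sum>k\<le>n. fls_nth (f ^ k) (int n) / of_nat (fact k)))"

text \<open>exp of a one-variable power series:  e^(c + g) = e^c e^g.\<close>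
definition exp1 :: "real fls \<Rightarrow> real fls" where
  "exp1 f = fls_const (exp (fls_nth f 0)) * expN (f - fls_const (fls_nth f 0))"

text \<open>exp of a two-variable power series (no negative powers of X or Y).\<close>
definition ex :: "ser \<Rightarrow> ser" where
  "ex u = fls_const (exp1 (fls_nth u 0)) * expN (u - fls_const (fls_nth u 0))"

definition c2 :: "real \<Rightarrow> ser" where
  "c2 a = fls_const (fls_const a)"

definition Xo :: ser where "Xo = fls_X"
definition Yi :: ser where "Yi = fls_const fls_X"

text \<open>Outer series  sum_m X^m/m * H v (tv (m-1)),  i.e.  d_v D(lambda) F  (or Dbar).\<close>
definition Ox :: "(var \<Rightarrow> var \<Rightarrow> real) \<Rightarrow> (nat \<Rightarrow> var) \<Rightarrow> var \<Rightarrow> ser" where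
  "Ox H tv v = dser (\<lambda>i. fls_const (H v (tv i)))"

text \<open>Inner series  sum_n Y^n/n * H v (tv (n-1)),  i.e.  d_v D(mu) F  (or Dbar).\<close>
definition Iy :: "(var \<Rightarrow> var \<Rightarrow> real) \<Rightarrow> (nat \<Rightarrow> var) \<Rightarrow> var \<Rightarrow> ser" where
  "Iy H tv v = fls_const (dser (\<lambda>j. H v (tv j)))"

text \<open>sum_{m,n} X^m Y^n/(m n) * H (tv1 (m-1)) (tv2 (n-1)),  i.e.  D(lambda) D(mu) F.\<close>
definition OI :: "(var \<Rightarrow> var \<Rightarrow> real) \<Rightarrow> (nat \<Rightarrow> var) \<Rightarrow> (nat \<Rightarrow> var) \<Rightarrow> ser" where
  "OI H tv1 tv2 = dser (\<lambda>i. dser (\<lambda>j. H (tv1 i) (tv2 j)))"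

text \<open>dH1a/dH1b: X = lambda^-1, Y = mu^-1.\<close>
definition dH1a :: "(var \<Rightarrow> var \<Rightarrow> real) \<Rightarrow> bool" where
  "dH1a H \<longleftrightarrow>
    (let l = inverse Xo; m = inverse Yi in
     ex (OI H Vt Vt) =
       (l * ex (- Ox H Vt Vr) - m * ex (- Iy H Vt Vr)) / (l - m)
       + inverse (l * m) *
         ex (c2 (H Vs Vs) + Iy H Vt Vs + Ox H Vt Vs + OI H Vt Vt + c2 (H Vr Vs)))"

definition dH1b :: "(var \<Rightarrow> var \<Rightarrow> real) \<Rightarrow> bool" where
  "dH1b H \<longleftrightarrow>
    (let l = inverse Xo; m = inverse Yi in
     ex (OI H Vt Vt) =
       (l * ex (- Ox H Vt Vs) - m * ex (- Iy H Vt Vs)) / (l - m)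
       + inverse (l * m) *
         ex (c2 (H Vr Vr) + Iy H Vt Vr + Ox H Vt Vr + OI H Vt Vt + c2 (H Vr Vs)))"

text \<open>dH2a/dH2b: X = lambda, Y = mu.\<close>
definition dH2a :: "(var \<Rightarrow> var \<Rightarrow> real) \<Rightarrow> bool" where
  "dH2a H \<longleftrightarrow>
    (let l = Xo; m = Yi in
     ex (OI H Vtb Vtb) =
       (inverse l * ex (- Ox H Vtb Vr) - inverse m * ex (- Iy H Vtb Vr))
         / (inverse l - inverse m)
       + (l * m) *
         ex (c2 (H Vs Vs) - Iy H Vtb Vs - Ox H Vtb Vs + OI H Vtb Vtb - c2 (H Vr Vs)))"

definition dH2b :: "(var \<Rightarrow> var \<Rightarrow> real) \<Rightarrow> bool" where
  "dH2b H \<longleftrightarrow>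
    (let l = Xo; m = Yi in
     ex (OI H Vtb Vtb) =
       (inverse l * ex (Ox H Vtb Vs) - inverse m * ex (Iy H Vtb Vs))
         / (inverse l - inverse m)
       + (l * m) *
         ex (c2 (H Vr Vr) + Iy H Vtb Vr + Ox H Vtb Vr + OI H Vtb Vtb - c2 (H Vr Vs)))"

text \<open>dH3a/dH3b: X = lambda^-1, Y = mu.\<close>
definition dH3a :: "(var \<Rightarrow> var \<Rightarrow> real) \<Rightarrow> bool" where
  "dH3a H \<longleftrightarrow>
    (let l = inverse Xo; m = Yi in
     ex (OI H Vt Vtb) =
       ex (- (Iy H Vtb Vr + Iy H Vtb Vs))
       - (l * m) * ex (- (Ox H Vt Vr + Iy H Vtb Vs + c2 (H Vr Vs)))
       + (l * m) *
         ex (c2 (H Vs Vs) - Iy H Vtb Vs - Ox H Vt Vs + OI H Vt Vtb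
             - (c2 (H Vr Vs) + c2 (H Vs Vs))))"

definition dH3b :: "(var \<Rightarrow> var \<Rightarrow> real) \<Rightarrow> bool" where
  "dH3b H \<longleftrightarrow>
    (let l = inverse Xo; m = Yi in
     ex (OI H Vt Vtb) =
       1 - (m / l) * ex (c2 (H Vs Vs) + Ox H Vt Vs - Iy H Vtb Vs)
       + (m / l) * ex (c2 (H Vr Vr) + Iy H Vtb Vr + Ox H Vt Vr + OI H Vt Vtb))"

text \<open>dH1c: X = lambda^-1 (only the outer variable occurs).\<close>
definition dH1c :: "(var \<Rightarrow> var \<Rightarrow> real) \<Rightarrow> bool" where
  "dH1c H \<longleftrightarrow>
    (let l = inverse Xo in
     l * (ex (- Ox H Vt Vs) - ex (- Ox H Vt Vr))
     + inverse l * (ex (c2 (H Vs Vr) + c2 (H Vs Vs) + Ox H Vt Vs)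
                    - ex (c2 (H Vr Vr) + c2 (H Vr Vs) + Ox H Vt Vr))
     = c2 (H Vr (Vt 0) - H Vs (Vt 0)))"

text \<open>dH2c: X = lambda.\<close>
definition dH2c :: "(var \<Rightarrow> var \<Rightarrow> real) \<Rightarrow> bool" where
  "dH2c H \<longleftrightarrow>
    (let l = Xo in
     inverse l * (ex (Ox H Vtb Vs) - ex (- Ox H Vtb Vr))
     + l * (ex (- (c2 (H Vs Vr) - c2 (H Vs Vs) + Ox H Vtb Vs))
            - ex (c2 (H Vr Vr) - c2 (H Vr Vs) + Ox H Vtb Vr))
     = c2 (H Vr (Vtb 0) + H Vs (Vtb 0)))"

definition dH3c :: "(var \<Rightarrow> var \<Rightarrow> real) \<Rightarrow> bool" where
  "dH3c H \<longleftrightarrow>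
    H Vr (Vtb 0) + H Vs (Vtb 0) = exp (- H Vr Vs) * (H Vr (Vt 0) - H Vs (Vt 0))"

end

theory Submission imports Defs begin

(* At every point the equations only involve the Hessian H of F, so the theorem reduces to a
   purely algebraic statement about H, valid as soon as H is symmetric in s and r.  Symmetry
   is Schwarz's theorem for the smooth function F.

   The algebraic argument works in the field of two-variable formal series in X (outer) and
   Y (inner).  After splitting all exponentials, each equation has the form  E = R + P E  for
   the common unknown E = exp(D D F).  Eliminating E between the "a" and the "b" equation of
   the pair (dH1a), (dH1b) gives an identity  phiT(X) = phiT(Y)  for a one-variable series
   phiT; such an identity holds iff phiT is constant, and since the constant term of phiT is
   H_r,t1 - H_s,t1, this is exactly (dH1c).  The same with a series phiB in the times tbar
   gives (dH2c).  In the mixed pair (dH3a), (dH3b) the elimination gives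
   phiT(X) = exp(H_rs) phiB(Y), which under (dH1c), (dH2c) is (dH3c). *)

unbundle fps_syntax

section \<open>Series in the outer and in the inner variable\<close>

text \<open>A one-variable series f gives f(Y) = fls_const f and f(X) = inX f in the field of
  two-variable series; inX is a field homomorphism.\<close>

definition inX :: "real fls \<Rightarrow> ser" where
  "inX f = Abs_fls (\<lambda>n. fls_const (f $$ n))"

lemma inX_nth [simp]: "inX f $$ n = fls_const (f $$ n)"
proof -
  have "\<forall>\<^sub>\<infinity> n::nat. fls_const (f $$ (- int n)) = 0"
    using MOST_fls_neg_nth_eq_0[of f] by (rule eventually_mono) simp
  thus ?thesis unfolding inX_def by simp
qed

lemma inX_add [simp]: "inX (f + g) = inX f + inX g"
  by (intro fls_eqI) (simp flip: fls_plus_const)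

lemma inX_diff [simp]: "inX (f - g) = inX f - inX g"
  by (intro fls_eqI) (simp flip: fls_minus_const)

lemma inX_const [simp]: "inX (fls_const c) = fls_const (fls_const c)"
  by (intro fls_eqI) simp

lemma inX_X [simp]: "inX fls_X = fls_X"
  by (intro fls_eqI) simp

lemma inX_inj: "inX f = inX g \<longleftrightarrow> f = g"
  by (auto simp: fls_eq_iff)

lemma inX_0 [simp]: "inX 0 = 0"
  and inX_1 [simp]: "inX 1 = 1"
  and inX_eq_0_iff [simp]: "inX f = 0 \<longleftrightarrow> f = 0"
  by (simp_all add: fls_eq_iff)

lemma fls_const_sum: "fls_const (\<Sum>i\<in>A. f i) = (\<Sum>i\<in>A. fls_const (f i) :: 'a::comm_monoid_add fls)"
  by (induction A rule: infinite_finite_induct) (auto simp flip: fls_plus_const)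

lemma inX_subdegree [simp]: "fls_subdegree (inX f) = fls_subdegree f"
proof (cases "f = 0")
  case False
  show ?thesis
    by (rule fls_subdegree_eqI) (use False in auto)
qed simp

lemma inX_mult [simp]: "inX (f * g) = inX f * inX g"
  by (rule fls_eqI) (simp add: fls_times_nth(2)[of "inX f"] fls_times_nth(2)[of f] fls_const_sum)

lemma inX_inverse [simp]: "inX (inverse f) = inverse (inX f)"
proof (cases "f = 0")
  case False
  hence "inX f * inX (inverse f) = 1" by (simp flip: inX_mult)
  thus ?thesis using False by (simp add: field_simps)
qed simp

lemma inX_power [simp]: "inX (f ^ n) = inX f ^ n"
  by (induction n) simp_all

lemma inX_eq_inY_iff: "inX f = fls_const f \<longleftrightarrow> f = fls_const (f $$ 0)"
proof
  assume h: "inX f = fls_const f"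
  have "fls_const (f $$ n) = 0" if "n \<noteq> 0" for n
    using arg_cong[OF h, of "\<lambda>u. u $$ n"] that by simp
  thus "f = fls_const (f $$ 0)"
    by (intro fls_eqI) simp
next
  assume "f = fls_const (f $$ 0)"
  thus "inX f = fls_const f" by (metis inX_const)
qed

lemma c2_mult: "c2 (x * y) = c2 x * c2 y"
  by (simp add: c2_def)

lemma c2_inverse: "c2 (inverse x) = inverse (c2 x)"
  by (simp add: c2_def fls_inverse_const)

lemma c2_eq_iff: "c2 a = c2 b \<longleftrightarrow> a = b"
  unfolding c2_def by (metis fls_const_nth)

lemma c2_eq_0_iff [simp]: "c2 x = 0 \<longleftrightarrow> x = 0"
  by (simp add: c2_def)

lemma inX_eq_c2_iff: "inX f = c2 k \<longleftrightarrow> f = fls_const k"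
  by (metis c2_def inX_const inX_inj)

section \<open>Power series and the formal exponential\<close>

definition is_ps :: "'a::zero fls \<Rightarrow> bool" where
  "is_ps f \<longleftrightarrow> f \<in> range fps_to_fls"

lemma is_ps_fps [simp]: "is_ps (fps_to_fls g)"
  by (simp add: is_ps_def)

lemma is_ps_const [simp]: "is_ps (fls_const c)"
  by (metis is_ps_fps fps_const_to_fls)

lemma is_ps_add [simp]: "is_ps f \<Longrightarrow> is_ps g \<Longrightarrow> is_ps (f + (g::'a::monoid_add fls))"
  by (auto simp: is_ps_def simp flip: fps_to_fls_plus)

lemma is_ps_uminus [simp]: "is_ps f \<Longrightarrow> is_ps (- (f::'a::group_add fls))"
  by (auto simp: is_ps_def simp flip: fps_to_fls_uminus)

lemma is_ps_diff [simp]: "is_ps f \<Longrightarrow> is_ps g \<Longrightarrow> is_ps (f - (g::'a::group_add fls))"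
  by (auto simp: is_ps_def simp flip: fps_to_fls_minus)

lemma is_ps_mult [simp]: "is_ps f \<Longrightarrow> is_ps g \<Longrightarrow> is_ps (f * (g::'a::{comm_monoid_add,mult_zero} fls))"
  by (auto simp: is_ps_def simp flip: fls_times_fps_to_fls)

lemma is_ps_0 [simp]: "is_ps (0::'a::zero fls)"
  by (metis is_ps_const fls_const_0)

lemma is_ps_neg_nth: "is_ps f \<Longrightarrow> n < 0 \<Longrightarrow> f $$ n = 0"
  by (auto simp: is_ps_def)

lemma is_ps_inX [simp]: "is_ps f \<Longrightarrow> is_ps (inX f)"
proof -
  assume "is_ps f"
  then obtain g where "f = fps_to_fls g" by (auto simp: is_ps_def)
  hence "inX f = fps_to_fls (Abs_fps (\<lambda>n. fls_const (fps_nth g n)))"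
    by (intro fls_eqI) simp
  thus ?thesis by simp
qed

text \<open>A series  1 - X S  with S a power series is a unit: its constant term is 1.\<close>

lemma one_minus_X_times_nonzero: "is_ps (S::ser) \<Longrightarrow> 1 - fls_X * S \<noteq> 0"
proof
  assume "is_ps S" "1 - fls_X * S = 0"
  then obtain g where "S = fps_to_fls g" by (auto simp: is_ps_def)
  hence "(1 - fls_X * S) $$ 0 = 1" by (simp add: fls_X_times_conv_shift)
  thus False using \<open>1 - fls_X * S = 0\<close> by simp
qed

definition fexp :: "'a::field_char_0 fps \<Rightarrow> 'a fps" where
  "fexp g = fps_exp 1 oo g"

lemma expN_fps: "expN (fps_to_fls g) = fps_to_fls (fexp g)"
  unfolding expN_def fexp_def
  by (simp add: fps_eq_iff fps_compose_nth atMost_atLeast0 divide_inverse mult.commute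
      flip: fps_to_fls_power del: fps_to_fls_power)

text \<open>Additivity  exp(g + h) = exp g exp h, via the differential equation  (exp g)' = exp g g'.\<close>

lemma fexp_deriv: "fps_nth g 0 = 0 \<Longrightarrow> fps_deriv (fexp g) = fexp g * fps_deriv g"
  unfolding fexp_def by (simp add: fps_compose_deriv)

lemma fexp_add:
  assumes g: "fps_nth g 0 = 0" and h: "fps_nth h 0 = 0"
  shows "fexp (g + h) = fexp g * fexp h"
proof -
  define W where "W = fexp (- (g + h))"
  have gh: "fps_nth (g + h) 0 = 0" "fps_nth (- (g + h)) 0 = 0" using g h by simp_all
  have "fps_deriv (fexp g * fexp h * W) = 0"
    unfolding W_def using g h gh by (simp add: fexp_deriv fps_deriv_mult algebra_simps)
  hence prod: "fexp g * fexp h * W = 1"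
    using fps_deriv_eq_0_iff[of "fexp g * fexp h * W"] by (simp add: W_def fexp_def)
  have "fps_deriv (fexp (g + h) * W) = 0"
    unfolding W_def using g h gh by (simp add: fexp_deriv fps_deriv_mult algebra_simps)
  hence sum: "fexp (g + h) * W = 1"
    using fps_deriv_eq_0_iff[of "fexp (g + h) * W"] by (simp add: W_def fexp_def)
  have "fexp g * fexp h = fexp g * fexp h * (fexp (g + h) * W)" using sum by simp
  also have "\<dots> = fexp (g + h) * (fexp g * fexp h * W)" by (simp add: algebra_simps)
  finally show ?thesis using prod by simp
qed

text \<open>Both exp1 and ex have the shape  e(f_0) exp(f - f_0)  with an exponential e of the
  constant term (the real exponential, resp. exp1 itself).\<close>

definition exp_lift :: "('a::field_char_0 \<Rightarrow> 'a) \<Rightarrow> 'a fls \<Rightarrow> 'a fls" where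
  "exp_lift e f = fls_const (e (f $$ 0)) * expN (f - fls_const (f $$ 0))"

lemma exp1_exp_lift: "exp1 = exp_lift exp"
  by (simp add: fun_eq_iff exp1_def exp_lift_def)

lemma ex_exp_lift: "ex = exp_lift exp1"
  by (simp add: fun_eq_iff ex_def exp_lift_def)

lemma exp_lift_fps:
  "exp_lift e (fps_to_fls F) = fls_const (e (fps_nth F 0)) * fps_to_fls (fexp (F - fps_const (fps_nth F 0)))"
  unfolding exp_lift_def by (simp add: expN_fps flip: fps_const_to_fls fps_to_fls_minus)

lemma exp_lift_add:
  assumes "is_ps f" "is_ps g" and e: "e (f $$ 0 + g $$ 0) = e (f $$ 0) * e (g $$ 0)"
  shows "exp_lift e (f + g) = exp_lift e f * exp_lift e g"
proof -
  obtain F G where fg: "f = fps_to_fls F" "g = fps_to_fls G"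
    using assms(1,2) by (auto simp: is_ps_def)
  have centred: "F + G - fps_const (fps_nth F 0 + fps_nth G 0)
      = (F - fps_const (fps_nth F 0)) + (G - fps_const (fps_nth G 0))"
    by (simp add: algebra_simps flip: fps_const_add)
  have "fexp (F + G - fps_const (fps_nth F 0 + fps_nth G 0))
      = fexp (F - fps_const (fps_nth F 0)) * fexp (G - fps_const (fps_nth G 0))"
    unfolding centred by (rule fexp_add) simp_all
  thus ?thesis using e
    by (simp add: fg exp_lift_fps fls_times_fps_to_fls algebra_simps
        flip: fps_to_fls_plus fls_const_mult_const)
qed

lemma expN_0 [simp]: "expN 0 = 1"
  using expN_fps[of 0] by (simp add: fexp_def)

lemma exp_lift_const [simp]: "exp_lift e (fls_const c) = fls_const (e c)"
  by (simp add: exp_lift_def)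

lemma inverse_of_additive:
  fixes h :: "'a::group_add \<Rightarrow> 'b::field"
  assumes "h (u + - u) = h u * h (- u)" and "h 0 = 1"
  shows "h (- u) = inverse (h u)" and "h u \<noteq> 0"
  using assms by (auto simp: inverse_unique)

lemma exp1_add: "is_ps f \<Longrightarrow> is_ps g \<Longrightarrow> exp1 (f + g) = exp1 f * exp1 g"
  unfolding exp1_exp_lift by (rule exp_lift_add) (simp_all add: exp_add)

lemma exp1_const [simp]: "exp1 (fls_const x) = fls_const (exp x)"
  by (simp add: exp1_exp_lift)

lemma exp1_0 [simp]: "exp1 0 = 1"
  using exp1_const[of 0] by simp

lemma exp1_uminus: "is_ps d \<Longrightarrow> exp1 (- d) = inverse (exp1 d)"
  and exp1_nonzero: "is_ps d \<Longrightarrow> exp1 d \<noteq> 0"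
  using inverse_of_additive[of exp1 d] exp1_add[of d "- d"] exp1_const[of 0] by simp_all

lemma is_ps_exp1 [simp]: "is_ps (exp1 d)"
  unfolding exp1_def expN_def by simp

lemma is_ps_inverse_exp1 [simp]: "is_ps d \<Longrightarrow> is_ps (inverse (exp1 d))"
  by (metis is_ps_exp1 exp1_uminus)

lemma exp1_nth1: "is_ps d \<Longrightarrow> d $$ 0 = 0 \<Longrightarrow> exp1 d $$ 1 = d $$ 1"
proof -
  assume "is_ps d" "d $$ 0 = 0"
  then obtain g where g: "d = fps_to_fls g" "fps_nth g 0 = 0" by (auto simp: is_ps_def)
  have "fps_nth (fexp g) 1 = fps_nth g 1"
    unfolding fexp_def by (simp add: fps_compose_nth g)
  thus ?thesis using g by (simp add: exp1_exp_lift exp_lift_fps)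
qed

lemma inverse_exp1_nth1: "is_ps d \<Longrightarrow> d $$ 0 = 0 \<Longrightarrow> inverse (exp1 d) $$ 1 = - d $$ 1"
  using exp1_nth1[of "- d"] exp1_uminus[of d] by simp

definition is_ps2 :: "ser \<Rightarrow> bool" where
  "is_ps2 u \<longleftrightarrow> is_ps u \<and> is_ps (u $$ 0)"

lemma is_ps2_add [simp]: "is_ps2 u \<Longrightarrow> is_ps2 v \<Longrightarrow> is_ps2 (u + v)"
  and is_ps2_uminus [simp]: "is_ps2 u \<Longrightarrow> is_ps2 (- u)"
  and is_ps2_diff [simp]: "is_ps2 u \<Longrightarrow> is_ps2 v \<Longrightarrow> is_ps2 (u - v)"
  and is_ps2_fls_const [simp]: "is_ps d \<Longrightarrow> is_ps2 (fls_const d)"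
  and is_ps2_inX [simp]: "is_ps d \<Longrightarrow> is_ps2 (inX d)"
  and is_ps2_c2 [simp]: "is_ps2 (c2 x)"
  by (simp_all add: is_ps2_def c2_def)

lemma ex_add: "is_ps2 u \<Longrightarrow> is_ps2 v \<Longrightarrow> ex (u + v) = ex u * ex v"
  unfolding ex_exp_lift by (rule exp_lift_add) (simp_all add: is_ps2_def exp1_add)

lemma ex_const [simp]: "ex (fls_const d) = fls_const (exp1 d)"
  by (simp add: ex_exp_lift)

lemma ex_uminus: "is_ps2 u \<Longrightarrow> ex (- u) = inverse (ex u)"
  using inverse_of_additive(1)[of ex u] ex_add[of u "- u"] ex_const[of 0] by simp

lemma ex_diff: "is_ps2 u \<Longrightarrow> is_ps2 v \<Longrightarrow> ex (u - v) = ex u * inverse (ex v)"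
  using ex_add[of u "- v"] ex_uminus[of v] by simp

lemma ex_c2 [simp]: "ex (c2 x) = c2 (exp x)"
  by (simp add: c2_def)

lemma ex_inX: "ex (inX d) = inX (exp1 d)"
proof -
  have "inX (expN f) = expN (inX f)" for f
    unfolding expN_def
    by (rule fls_eqI) (simp add: fls_const_sum fls_const_divide_const fls_of_nat flip: inX_power)
  thus ?thesis unfolding ex_def exp1_def by (simp flip: inX_const)
qed

section \<open>The generating series of the Hessian\<close>

text \<open>hser H tv v = sum over n \<ge> 1 of Z^n/n H v (tv (n-1)), i.e. d_v D(Z) F in one variable;
  the series Ox and Iy of the equations are its copies in X and in Y.\<close>

definition hser :: "(var \<Rightarrow> var \<Rightarrow> real) \<Rightarrow> (nat \<Rightarrow> var) \<Rightarrow> var \<Rightarrow> real fls" where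
  "hser H tv v = dser (\<lambda>i. H v (tv i))"

lemma is_ps_dser [simp]: "is_ps (dser c)"
  and dser_nth0 [simp]: "dser c $$ 0 = 0"
  and dser_nth1 [simp]: "dser c $$ 1 = c 0"
  by (simp_all add: dser_def)

lemma is_ps_hser [simp]: "is_ps (hser H tv v)"
  and hser_nth0 [simp]: "hser H tv v $$ 0 = 0"
  and hser_nth1 [simp]: "hser H tv v $$ 1 = H v (tv 0)"
  by (simp_all add: hser_def)

lemma Ox_inX: "Ox H tv v = inX (hser H tv v)"
  unfolding Ox_def hser_def dser_def
  by (rule fls_eqI) (simp add: fls_const_divide_const fls_of_nat)

lemma Iy_const: "Iy H tv v = fls_const (hser H tv v)"
  unfolding Iy_def hser_def ..

lemma is_ps2_OI [simp]: "is_ps2 (OI H a b)"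
  unfolding is_ps2_def OI_def by simp

text \<open>Rewrite rules that bring every exponential in the equations into the form
  inX (exp1 _), fls_const (exp1 _), c2 (exp _) or ex (OI _ _ _).\<close>

lemmas ex_normalise = Ox_inX Iy_const ex_add ex_uminus ex_diff ex_inX

section \<open>Elimination of the common unknown, in an arbitrary field\<close>

lemma affine_same_solution:
  fixes E R1 R2 P1 P2 :: "'a::field"
  assumes E: "E = R1 + P1 * E" and P1: "1 - P1 \<noteq> 0"
  shows "E = R2 + P2 * E \<longleftrightarrow> R1 * (1 - P2) = R2 * (1 - P1)"
proof
  assume "E = R2 + P2 * E"
  thus "R1 * (1 - P2) = R2 * (1 - P1)" using E by algebra
next
  assume "R1 * (1 - P2) = R2 * (1 - P1)"
  hence "(1 - P1) * (E - P2 * E) = (1 - P1) * R2" using E by algebra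
  hence "R2 = E - P2 * E" using P1 by simp
  thus "E = R2 + P2 * E" by simp
qed

text \<open>For the pairs (dH1a, dH1b) and (dH2a, dH2b), with L, M standing for the two spectral
  variables, the difference of the cross products separates into a function of L minus the
  same function of M.\<close>

lemma two_point_cross_product:
  fixes L M pl pm ql qm k1 k2 :: "'a::field"
  assumes "L \<noteq> 0" "M \<noteq> 0" "L \<noteq> M" "pl \<noteq> 0" "pm \<noteq> 0" "ql \<noteq> 0" "qm \<noteq> 0"
  shows "(L * inverse pl - M * inverse pm) / (L - M) * (1 - inverse (L * M) * (k2 * pl * pm))
      - (L * inverse ql - M * inverse qm) / (L - M) * (1 - inverse (L * M) * (k1 * ql * qm))
    = ((L * (inverse pl - inverse ql) + inverse L * (k2 * pl - k1 * ql))
      - (M * (inverse pm - inverse qm) + inverse M * (k2 * pm - k1 * qm))) / (L - M)"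
proof -
  have "(L * inverse pl - M * inverse pm) / (L - M) * (1 - inverse (L * M) * (k2 * pl * pm))
      - (L * inverse ql - M * inverse qm) / (L - M) * (1 - inverse (L * M) * (k1 * ql * qm))
    = ((L * inverse pl - M * inverse pm) * (1 - inverse L * inverse M * (k2 * pl * pm))
      - (L * inverse ql - M * inverse qm) * (1 - inverse L * inverse M * (k1 * ql * qm))) / (L - M)"
    by (simp add: divide_inverse algebra_simps)
  also have "(L * inverse pl - M * inverse pm) * (1 - inverse L * inverse M * (k2 * pl * pm))
      - (L * inverse ql - M * inverse qm) * (1 - inverse L * inverse M * (k1 * ql * qm))
    = (L * (inverse pl - inverse ql) + inverse L * (k2 * pl - k1 * ql))
      - (M * (inverse pm - inverse qm) + inverse M * (k2 * pm - k1 * qm))"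
    using assms(1,2,4-7)[THEN right_inverse] by algebra
  finally show ?thesis .
qed

lemma two_point_elimination:
  fixes L M E pl pm ql qm k1 k2 :: "'a::field"
  assumes nz: "L \<noteq> 0" "M \<noteq> 0" "L \<noteq> M" "pl \<noteq> 0" "pm \<noteq> 0" "ql \<noteq> 0" "qm \<noteq> 0"
    and P1: "1 - inverse (L * M) * (k1 * ql * qm) \<noteq> 0"
    and E: "E = (L * inverse pl - M * inverse pm) / (L - M) + inverse (L * M) * (k1 * ql * qm) * E"
  shows "E = (L * inverse ql - M * inverse qm) / (L - M) + inverse (L * M) * (k2 * pl * pm) * E \<longleftrightarrow>
    L * (inverse pl - inverse ql) + inverse L * (k2 * pl - k1 * ql)
      = M * (inverse pm - inverse qm) + inverse M * (k2 * pm - k1 * qm)"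
  unfolding affine_same_solution[OF E P1]
  using two_point_cross_product[OF nz, of k2 k1] nz by (metis divide_eq_0_iff eq_iff_diff_eq_0)

text \<open>The same for the mixed pair (dH3a, dH3b), with L the outer and m the inner variable;
  here the difference separates up to the factor  m / wb.\<close>

lemma mixed_cross_product:
  fixes L m ua ub wa wb er es g :: "'a::field"
  assumes "L \<noteq> 0" "m \<noteq> 0" "ua \<noteq> 0" "ub \<noteq> 0" "wa \<noteq> 0" "wb \<noteq> 0" "g \<noteq> 0"
  shows "(1 - (m / L) * (es * ub * inverse wb)) * (1 - L * m * inverse g * inverse ub * inverse wb)
      - (inverse wa * inverse wb - L * m * inverse g * inverse ua * inverse wb) * (1 - (m / L) * (er * wa * ua))
    = m * inverse wb * ((L * inverse g * (inverse ua - inverse ub) + inverse L * (er * ua - es * ub))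
      - (inverse m * (inverse wa - wb) + m * inverse g * (er * wa - es * inverse wb)))"
  unfolding divide_inverse using assms[THEN right_inverse] by algebra

lemma mixed_elimination:
  fixes L m E ua ub wa wb er es g :: "'a::field"
  assumes nz: "L \<noteq> 0" "m \<noteq> 0" "ua \<noteq> 0" "ub \<noteq> 0" "wa \<noteq> 0" "wb \<noteq> 0" "g \<noteq> 0"
    and P1: "1 - (m / L) * (er * wa * ua) \<noteq> 0"
    and E: "E = 1 - (m / L) * (es * ub * inverse wb) + (m / L) * (er * wa * ua) * E"
  shows "E = inverse wa * inverse wb - L * m * inverse g * inverse ua * inverse wb
             + L * m * inverse g * inverse ub * inverse wb * E \<longleftrightarrow>
    inverse m * (inverse wa - wb) + m * inverse g * (er * wa - es * inverse wb)
      = L * inverse g * (inverse ua - inverse ub) + inverse L * (er * ua - es * ub)"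
  unfolding affine_same_solution[OF E P1]
  using mixed_cross_product[OF nz] nz by (metis eq_iff_diff_eq_0 mult_eq_0_iff inverse_nonzero_iff_nonzero)

section \<open>The three pairs of equations\<close>

text \<open>The shape shared by (dH1a), (dH1b), (dH2a), (dH2b): with  L = 1/X, M = 1/Y,
  E = (L/a(X) - M/a(Y)) / (L - M) + k b(X) b(Y) E / (L M).\<close>

definition two_point :: "real \<Rightarrow> real fls \<Rightarrow> real fls \<Rightarrow> ser \<Rightarrow> bool" where
  "two_point k a b E \<longleftrightarrow>
     (let L = inverse fls_X; M = inverse (fls_const fls_X) in
      E = (L * inverse (inX a) - M * inverse (fls_const a)) / (L - M)
          + inverse (L * M) * (c2 k * inX b * fls_const b) * E)"

text \<open>The one-variable series phi whose values at X and at Y are compared when E is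
  eliminated between  two_point k1 a b E  and  two_point k2 b a E.\<close>

definition two_point_phi :: "real \<Rightarrow> real \<Rightarrow> real fls \<Rightarrow> real fls \<Rightarrow> real fls" where
  "two_point_phi k1 k2 a b =
     inverse fls_X * (inverse a - inverse b) + fls_X * (fls_const k2 * a - fls_const k1 * b)"

lemma X_ne_Y: "(fls_X::ser) \<noteq> fls_const fls_X"
proof
  assume "(fls_X::ser) = fls_const fls_X"
  hence "(fls_X::ser) $$ 1 = fls_const fls_X $$ 1" by simp
  thus False by simp
qed

lemma two_point_elim:
  assumes "is_ps b" "a \<noteq> 0" "b \<noteq> 0" and E: "two_point k1 a b E"
  shows "two_point k2 b a E \<longleftrightarrow> two_point_phi k1 k2 a b = fls_const (two_point_phi k1 k2 a b $$ 0)"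
proof -
  have P1: "1 - inverse (inverse fls_X * inverse (fls_const fls_X)) * (c2 k1 * inX b * fls_const b) \<noteq> 0"
    using one_minus_X_times_nonzero[of "fls_const fls_X * c2 k1 * inX b * fls_const b"] assms(1)
    by (simp add: mult_ac c2_def)
  have nz: "inverse fls_X \<noteq> (0::ser)" "inverse (fls_const fls_X) \<noteq> (0::ser)"
    "inverse (fls_X::ser) \<noteq> inverse (fls_const fls_X)"
    "inX a \<noteq> 0" "fls_const a \<noteq> 0" "inX b \<noteq> 0" "fls_const b \<noteq> 0"
    using assms(2,3) X_ne_Y by simp_all
  have "two_point k2 b a E \<longleftrightarrow> inX (two_point_phi k1 k2 a b) = fls_const (two_point_phi k1 k2 a b)"
    unfolding two_point_def Let_def two_point_elimination[OF nz P1 E[unfolded two_point_def Let_def]]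
    by (simp only: two_point_phi_def inX_add inX_diff inX_mult inX_inverse inX_X inX_const
        c2_def inverse_inverse_eq fls_minus_const[symmetric] fls_plus_const[symmetric]
        fls_const_mult_const[symmetric] fls_inverse_const[symmetric])
  thus ?thesis by (simp only: inX_eq_inY_iff)
qed

text \<open>The constant term of phi comes from the 1/X part alone.\<close>

lemma two_point_phi_nth0:
  "is_ps a \<Longrightarrow> is_ps b \<Longrightarrow> two_point_phi k1 k2 a b $$ 0 = inverse a $$ 1 - inverse b $$ 1"
  by (simp add: two_point_phi_def fls_inverse_X fls_X_inv_times_conv_shift fls_X_times_conv_shift is_ps_neg_nth)

text \<open>The series phi of the pair (dH1a), (dH1b) (times t) and of the pair (dH2a), (dH2b)
  (times tbar), and their constant terms.\<close>

definition phiT :: "(var \<Rightarrow> var \<Rightarrow> real) \<Rightarrow> real fls" where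
  "phiT H = two_point_phi (exp (H Vr Vr) * exp (H Vr Vs)) (exp (H Vs Vs) * exp (H Vr Vs))
              (exp1 (hser H Vt Vs)) (exp1 (hser H Vt Vr))"

definition phiB :: "(var \<Rightarrow> var \<Rightarrow> real) \<Rightarrow> real fls" where
  "phiB H = two_point_phi (exp (H Vr Vr) * inverse (exp (H Vr Vs))) (exp (H Vs Vs) * inverse (exp (H Vr Vs)))
              (inverse (exp1 (hser H Vtb Vs))) (exp1 (hser H Vtb Vr))"

lemma phiT_nth0: "phiT H $$ 0 = H Vr (Vt 0) - H Vs (Vt 0)"
  by (simp add: phiT_def two_point_phi_nth0 inverse_exp1_nth1)

lemma phiB_nth0: "phiB H $$ 0 = H Vr (Vtb 0) + H Vs (Vtb 0)"
  by (simp add: phiB_def two_point_phi_nth0 inverse_exp1_nth1 exp1_nth1)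

lemma dH1a_normal: "dH1a H \<longleftrightarrow>
    two_point (exp (H Vs Vs) * exp (H Vr Vs)) (exp1 (hser H Vt Vr)) (exp1 (hser H Vt Vs)) (ex (OI H Vt Vt))"
  unfolding dH1a_def two_point_def Let_def Xo_def Yi_def
  by (simp add: ex_normalise del: fls_const_uminus) (simp add: c2_mult mult_ac)

lemma dH1b_normal: "dH1b H \<longleftrightarrow>
    two_point (exp (H Vr Vr) * exp (H Vr Vs)) (exp1 (hser H Vt Vs)) (exp1 (hser H Vt Vr)) (ex (OI H Vt Vt))"
  unfolding dH1b_def two_point_def Let_def Xo_def Yi_def
  by (simp add: ex_normalise del: fls_const_uminus) (simp add: c2_mult mult_ac)

lemma dH2a_normal: "dH2a H \<longleftrightarrow>
    two_point (exp (H Vs Vs) * inverse (exp (H Vr Vs))) (exp1 (hser H Vtb Vr)) (inverse (exp1 (hser H Vtb Vs)))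
      (ex (OI H Vtb Vtb))"
  unfolding dH2a_def two_point_def Let_def Xo_def Yi_def
  by (simp add: ex_normalise del: fls_const_uminus) (simp add: c2_mult c2_inverse mult_ac fls_inverse_const)

lemma dH2b_normal: "dH2b H \<longleftrightarrow>
    two_point (exp (H Vr Vr) * inverse (exp (H Vr Vs))) (inverse (exp1 (hser H Vtb Vs))) (exp1 (hser H Vtb Vr))
      (ex (OI H Vtb Vtb))"
  unfolding dH2b_def two_point_def Let_def Xo_def Yi_def
  by (simp add: ex_normalise del: fls_const_uminus) (simp add: c2_mult c2_inverse mult_ac fls_inverse_const)

text \<open>(dH1c), (dH2c) state that phiT, phiB equal their constant terms; here the symmetry
  H_sr = H_rs is used.\<close>

lemma dH1c_normal: "H Vs Vr = H Vr Vs \<Longrightarrow> dH1c H \<longleftrightarrow> phiT H = fls_const (H Vr (Vt 0) - H Vs (Vt 0))"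
  unfolding dH1c_def Let_def Xo_def phiT_def two_point_phi_def
  by (simp add: ex_normalise del: fls_const_uminus flip: inX_eq_c2_iff) (simp add: c2_def mult_ac)

lemma dH2c_normal: "H Vs Vr = H Vr Vs \<Longrightarrow> dH2c H \<longleftrightarrow> phiB H = fls_const (H Vr (Vtb 0) + H Vs (Vtb 0))"
  unfolding dH2c_def Let_def Xo_def phiB_def two_point_phi_def
  by (simp add: ex_normalise del: fls_const_uminus flip: inX_eq_c2_iff)
    (simp add: c2_def mult_ac fls_inverse_const)

lemma dH1a_iff_dH1c:
  assumes sym: "H Vs Vr = H Vr Vs" and "dH1b H"
  shows "dH1a H \<longleftrightarrow> dH1c H"
proof -
  have "dH1a H \<longleftrightarrow> phiT H = fls_const (phiT H $$ 0)"
    unfolding dH1a_normal phiT_def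
    by (rule two_point_elim) (use assms(2) in \<open>simp_all add: dH1b_normal exp1_nonzero\<close>)
  thus ?thesis by (simp add: phiT_nth0 dH1c_normal[OF sym])
qed

lemma dH2a_iff_dH2c:
  assumes sym: "H Vs Vr = H Vr Vs" and "dH2b H"
  shows "dH2a H \<longleftrightarrow> dH2c H"
proof -
  have "dH2a H \<longleftrightarrow> phiB H = fls_const (phiB H $$ 0)"
    unfolding dH2a_normal phiB_def
    by (rule two_point_elim) (use assms(2) in \<open>simp_all add: dH2b_normal exp1_nonzero\<close>)
  thus ?thesis by (simp add: phiB_nth0 dH2c_normal[OF sym])
qed

lemma dH3b_normal: "dH3b H \<longleftrightarrow> ex (OI H Vt Vtb) =
    1 - (fls_const fls_X / inverse fls_X)
          * (c2 (exp (H Vs Vs)) * inX (exp1 (hser H Vt Vs)) * inverse (fls_const (exp1 (hser H Vtb Vs))))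
      + (fls_const fls_X / inverse fls_X)
          * (c2 (exp (H Vr Vr)) * fls_const (exp1 (hser H Vtb Vr)) * inX (exp1 (hser H Vt Vr)))
          * ex (OI H Vt Vtb)"
  unfolding dH3b_def Let_def Xo_def Yi_def
  by (simp add: ex_normalise del: fls_const_uminus) (simp add: mult_ac)

lemma dH3a_normal: "dH3a H \<longleftrightarrow> ex (OI H Vt Vtb) =
    inverse (fls_const (exp1 (hser H Vtb Vr))) * inverse (fls_const (exp1 (hser H Vtb Vs)))
    - inverse fls_X * fls_const fls_X * inverse (c2 (exp (H Vr Vs)))
        * inverse (inX (exp1 (hser H Vt Vr))) * inverse (fls_const (exp1 (hser H Vtb Vs)))
    + inverse fls_X * fls_const fls_X * inverse (c2 (exp (H Vr Vs)))
        * inverse (inX (exp1 (hser H Vt Vs))) * inverse (fls_const (exp1 (hser H Vtb Vs)))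
        * ex (OI H Vt Vtb)"
  unfolding dH3a_def Let_def Xo_def Yi_def
  by (simp add: ex_normalise del: fls_const_uminus) (simp add: c2_mult c2_inverse mult_ac)

text \<open>Eliminating E between (dH3a) and (dH3b) gives  phiT(X) = exp(H_rs) phiB(Y);  when
  phiT and phiB are the constants given by (dH1c), (dH2c), this is exactly (dH3c).\<close>

lemma dH3a_iff_phi_relation:
  assumes "dH3b H"
  shows "dH3a H \<longleftrightarrow> inX (phiT H) = c2 (exp (H Vr Vs)) * fls_const (phiB H)"
proof -
  define L m where "L = inverse (fls_X :: ser)" and "m = (fls_const fls_X :: ser)"
  define ua ub where "ua = inX (exp1 (hser H Vt Vr))" and "ub = inX (exp1 (hser H Vt Vs))"
  define wa wb where "wa = fls_const (exp1 (hser H Vtb Vr))" and "wb = fls_const (exp1 (hser H Vtb Vs))"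
  define er es g where "er = c2 (exp (H Vr Vr))" and "es = c2 (exp (H Vs Vs))" and "g = c2 (exp (H Vr Vs))"
  note defs = L_def m_def ua_def ub_def wa_def wb_def er_def es_def g_def
  have nz: "L \<noteq> 0" "m \<noteq> 0" "ua \<noteq> 0" "ub \<noteq> 0" "wa \<noteq> 0" "wb \<noteq> 0" "g \<noteq> 0"
    by (simp_all add: defs exp1_nonzero)
  have P1: "1 - (m / L) * (er * wa * ua) \<noteq> 0"
    using one_minus_X_times_nonzero[of "m * (er * wa * ua)"]
    by (simp add: defs divide_inverse mult_ac c2_def)
  have E: "ex (OI H Vt Vtb) = 1 - (m / L) * (es * ub * inverse wb) + (m / L) * (er * wa * ua) * ex (OI H Vt Vtb)"
    using assms unfolding dH3b_normal defs .
  have PM: "inverse m * (inverse wa - wb) + m * inverse g * (er * wa - es * inverse wb) = - fls_const (phiB H)"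
    by (simp add: defs phiB_def two_point_phi_def c2_def fls_inverse_const algebra_simps
        flip: fls_plus_const fls_minus_const fls_const_mult_const)
  have phiT_X: "inX (phiT H) = L * (inverse ub - inverse ua) + inverse L * (es * g * ub - er * g * ua)"
    by (simp add: defs phiT_def two_point_phi_def c2_def algebra_simps flip: fls_const_mult_const)
  have PL: "L * inverse g * (inverse ua - inverse ub) + inverse L * (er * ua - es * ub) = - inverse g * inX (phiT H)"
    unfolding phiT_X using nz(7) by (simp add: field_simps) (simp flip: add_divide_distrib)
  have "dH3a H \<longleftrightarrow> inverse m * (inverse wa - wb) + m * inverse g * (er * wa - es * inverse wb)
      = L * inverse g * (inverse ua - inverse ub) + inverse L * (er * ua - es * ub)"
    unfolding dH3a_normal defs[symmetric] by (rule mixed_elimination[OF nz P1 E])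
  also have "\<dots> \<longleftrightarrow> - fls_const (phiB H) = - inverse g * inX (phiT H)"
    by (simp only: PM PL)
  finally show ?thesis
    using nz(7) unfolding g_def by (auto simp: field_simps)
qed

lemma dH3a_iff_dH3c:
  assumes "dH3b H"
    and phiT: "phiT H = fls_const (H Vr (Vt 0) - H Vs (Vt 0))"
    and phiB: "phiB H = fls_const (H Vr (Vtb 0) + H Vs (Vtb 0))"
  shows "dH3a H \<longleftrightarrow> dH3c H"
proof -
  have "dH3a H \<longleftrightarrow> c2 (H Vr (Vt 0) - H Vs (Vt 0)) = c2 (exp (H Vr Vs) * (H Vr (Vtb 0) + H Vs (Vtb 0)))"
    unfolding dH3a_iff_phi_relation[OF assms(1)] phiT phiB by (simp add: c2_def)
  also have "\<dots> \<longleftrightarrow> dH3c H"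
    unfolding c2_eq_iff dH3c_def by (auto simp: exp_minus field_simps)
  finally show ?thesis .
qed

lemma hirota_systems_equivalent:
  assumes sym: "H Vs Vr = H Vr Vs"
  shows "(dH1a H \<and> dH1b H \<and> dH2a H \<and> dH2b H \<and> dH3a H \<and> dH3b H) \<longleftrightarrow>
         (dH1b H \<and> dH2b H \<and> dH3b H \<and> dH1c H \<and> dH2c H \<and> dH3c H)"
  using dH1a_iff_dH1c[OF sym] dH2a_iff_dH2c[OF sym] dH3a_iff_dH3c
    dH1c_normal[OF sym] dH2c_normal[OF sym] by blast

section \<open>Symmetry of the Hessian\<close>

lemma ipd_has_derivative_along:
  assumes sm: "smooth_F F"
  shows "((\<lambda>x. ipd vs F (q(v := x))) has_real_derivative pd v (ipd vs F) (q(v := x0))) (at x0)"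
proof -
  define q0 where "q0 = q(v := x0)"
  have "(\<lambda>h. ipd vs F (q0(v := q0 v + h))) differentiable (at 0)"
    using sm unfolding smooth_F_def by blast
  hence "((\<lambda>h. ipd vs F (q0(v := q0 v + h))) has_real_derivative pd v (ipd vs F) q0) (at 0)"
    unfolding pd_def by (simp add: DERIV_deriv_iff_real_differentiable)
  hence "((\<lambda>h. ipd vs F (q(v := h + x0))) has_real_derivative pd v (ipd vs F) q0) (at 0)"
    by (simp add: q0_def add.commute)
  hence "((\<lambda>x. ipd vs F (q(v := x))) has_real_derivative pd v (ipd vs F) q0) (at (0 + x0))"
    by (subst DERIV_shift) simp
  thus ?thesis by (simp add: q0_def)
qed

lemma mixed_difference_mvt:
  assumes sm: "smooth_F F" and vw: "v \<noteq> w" and t: "t > 0"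
  shows "\<exists>x y. p v < x \<and> x < p v + t \<and> p w < y \<and> y < p w + t \<and>
    F (p(v := p v + t, w := p w + t)) - F (p(v := p v + t)) - F (p(w := p w + t)) + F p
      = t * t * pd w (pd v F) (p(v := x, w := y))"
proof -
  define a b where "a = p v" and "b = p w"
  define psi where "psi x = F (p(w := b + t, v := x)) - F (p(v := x))" for x
  have dpsi: "DERIV psi x :> (pd v F (p(w := b + t, v := x)) - pd v F (p(v := x)))" for x
    unfolding psi_def
    using ipd_has_derivative_along[OF sm, of "[]" "p(w := b + t)" v x] ipd_has_derivative_along[OF sm, of "[]" p v x]
    by (auto intro!: derivative_eq_intros)
  obtain x where x: "a < x" "x < a + t" and
    psi_mvt: "psi (a + t) - psi a = (a + t - a) * (pd v F (p(w := b + t, v := x)) - pd v F (p(v := x)))"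
    using MVT2[of a "a + t" psi "\<lambda>x. pd v F (p(w := b + t, v := x)) - pd v F (p(v := x))"] dpsi t by auto
  define chi where "chi y = pd v F (p(v := x, w := y))" for y
  have dchi: "DERIV chi y :> pd w (pd v F) (p(v := x, w := y))" for y
    unfolding chi_def using ipd_has_derivative_along[OF sm, of "[v]" "p(v := x)" w y] by simp
  obtain y where y: "b < y" "y < b + t" and
    chi_mvt: "chi (b + t) - chi b = (b + t - b) * pd w (pd v F) (p(v := x, w := y))"
    using MVT2[of b "b + t" chi "\<lambda>y. pd w (pd v F) (p(v := x, w := y))"] dchi t by auto
  have e1: "p(w := b + t, v := x) = p(v := x, w := b + t)" using vw by (auto simp: fun_eq_iff)
  have e2: "p(v := x, w := b) = p(v := x)" unfolding b_def using vw by (auto simp: fun_eq_iff)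
  have e3: "p(w := b + t, v := a) = p(w := b + t)" unfolding a_def using vw by (auto simp: fun_eq_iff)
  have e4: "p(w := b + t, v := a + t) = p(v := a + t, w := b + t)" using vw by (auto simp: fun_eq_iff)
  have e5: "p(v := a) = p" unfolding a_def by simp
  have "F (p(v := p v + t, w := p w + t)) - F (p(v := p v + t)) - F (p(w := p w + t)) + F p
      = psi (a + t) - psi a"
    unfolding psi_def e3 e4 e5 by (simp add: a_def b_def)
  also have "\<dots> = t * (chi (b + t) - chi b)"
    using psi_mvt unfolding chi_def e1 e2 by simp
  also have "\<dots> = t * t * pd w (pd v F) (p(v := x, w := y))"
    using chi_mvt by simp
  finally show ?thesis using x y unfolding a_def b_def by blast
qed

lemma ipd_continuous_in_two_coordinates:
  assumes sm: "smooth_F F" and e: "e > 0"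
  shows "\<exists>d>0. \<forall>x y. \<bar>x - p v\<bar> < d \<and> \<bar>y - p w\<bar> < d \<longrightarrow> \<bar>ipd vs F (p(v := x, w := y)) - ipd vs F p\<bar> < e"
proof -
  define S where "S = {q. \<forall>u. u \<notin> {v, w} \<longrightarrow> q u = p u}"
  have cS: "continuous_on S (ipd vs F)" using sm unfolding smooth_F_def S_def by blast
  define gam :: "real \<times> real \<Rightarrow> pt" where "gam z = p(v := fst z, w := snd z)" for z
  have cg: "continuous_on UNIV gam"
  proof (rule continuous_on_coordinatewise_then_product)
    fix i
    show "continuous_on UNIV (\<lambda>z. gam z i)"
      unfolding gam_def by (cases "i = w"; cases "i = v") (auto intro!: continuous_intros)
  qed
  have "gam ` UNIV \<subseteq> S" unfolding gam_def S_def by auto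
  hence c: "continuous_on UNIV (\<lambda>z. ipd vs F (gam z))"
    using continuous_on_compose2[OF cS cg] by blast
  then obtain d where d: "d > 0" and
    hd: "\<And>z. dist z (p v, p w) < d \<Longrightarrow> dist (ipd vs F (gam z)) (ipd vs F (gam (p v, p w))) < e"
    using e unfolding continuous_on_iff by (metis UNIV_I)
  have gp: "gam (p v, p w) = p" unfolding gam_def by simp
  show ?thesis
  proof (intro exI[of _ "d/2"] conjI allI impI)
    show "d/2 > 0" using d by simp
    fix x y assume xy: "\<bar>x - p v\<bar> < d / 2 \<and> \<bar>y - p w\<bar> < d / 2"
    have "dist (x, y) (p v, p w) \<le> norm (x - p v) + norm (y - p w)"
      unfolding dist_norm using norm_Pair_le[of "x - p v" "y - p w"] by simp
    also have "\<dots> < d" using xy by simp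
    finally have "dist (x, y) (p v, p w) < d" .
    from hd[OF this] show "\<bar>ipd vs F (p(v := x, w := y)) - ipd vs F p\<bar> < e"
      unfolding gp by (simp add: gam_def dist_real_def)
  qed
qed

text \<open>Schwarz's theorem: if the mixed partials at p differed, both would stay apart near p,
  but the mixed second difference equals t^2 times either of them at nearby points.\<close>

lemma hess_symmetric:
  assumes sm: "smooth_F F"
  shows "hess F p v w = hess F p w v"
proof (cases "v = w")
  case vw: False
  define G1 where "G1 = ipd [w, v] F"
  define G2 where "G2 = ipd [v, w] F"
  show ?thesis
  proof (rule ccontr)
    assume "hess F p v w \<noteq> hess F p w v"
    hence ne: "G1 p \<noteq> G2 p" unfolding hess_def G1_def G2_def by simp
    define e where "e = \<bar>G1 p - G2 p\<bar> / 2"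
    have e: "e > 0" using ne unfolding e_def by simp
    obtain d1 where d1: "d1 > 0" and
      h1: "\<And>x y. \<bar>x - p v\<bar> < d1 \<and> \<bar>y - p w\<bar> < d1 \<Longrightarrow> \<bar>G1 (p(v := x, w := y)) - G1 p\<bar> < e"
      using ipd_continuous_in_two_coordinates[OF sm e, of p v w "[w, v]"] unfolding G1_def by blast
    obtain d2 where d2: "d2 > 0" and
      h2: "\<And>x y. \<bar>x - p v\<bar> < d2 \<and> \<bar>y - p w\<bar> < d2 \<Longrightarrow> \<bar>G2 (p(v := x, w := y)) - G2 p\<bar> < e"
      using ipd_continuous_in_two_coordinates[OF sm e, of p v w "[v, w]"] unfolding G2_def by blast
    define t where "t = min d1 d2"
    have t: "t > 0" using d1 d2 unfolding t_def by simp
    obtain x y where xy: "p v < x" "x < p v + t" "p w < y" "y < p w + t" and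
      E1: "F (p(v := p v + t, w := p w + t)) - F (p(v := p v + t)) - F (p(w := p w + t)) + F p
        = t * t * pd w (pd v F) (p(v := x, w := y))"
      using mixed_difference_mvt[OF sm vw t, of p] by auto
    obtain x' y' where xy': "p w < x'" "x' < p w + t" "p v < y'" "y' < p v + t" and
      E2: "F (p(w := p w + t, v := p v + t)) - F (p(w := p w + t)) - F (p(v := p v + t)) + F p
        = t * t * pd v (pd w F) (p(w := x', v := y'))"
      using mixed_difference_mvt[OF sm _ t, of w v p] vw by auto
    have swap: "p(w := p w + t, v := p v + t) = p(v := p v + t, w := p w + t)"
      "p(w := x', v := y') = p(v := y', w := x')"
      using vw by (auto simp: fun_eq_iff)
    have "t * t * pd w (pd v F) (p(v := x, w := y)) = t * t * pd v (pd w F) (p(v := y', w := x'))"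
      using E1 E2 unfolding swap by linarith
    hence "t * t * G1 (p(v := x, w := y)) = t * t * G2 (p(v := y', w := x'))"
      unfolding G1_def G2_def by simp
    hence eq: "G1 (p(v := x, w := y)) = G2 (p(v := y', w := x'))" using t by simp
    have "\<bar>G1 (p(v := x, w := y)) - G1 p\<bar> < e" using xy t_def by (intro h1) auto
    moreover have "\<bar>G2 (p(v := y', w := x')) - G2 p\<bar> < e" using xy' t_def by (intro h2) auto
    ultimately have "\<bar>G1 p - G2 p\<bar> < 2 * e" using eq by linarith
    thus False unfolding e_def by simp
  qed
qed simp

theorem corollary4:
  fixes F :: "pt \<Rightarrow> real"
  assumes "smooth_F F"
  shows "(\<forall>p. dH1a (hess F p) \<and> dH1b (hess F p) \<and> dH2a (hess F p) \<and> dH2b (hess F p)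
              \<and> dH3a (hess F p) \<and> dH3b (hess F p))
     \<longleftrightarrow> (\<forall>p. dH1b (hess F p) \<and> dH2b (hess F p) \<and> dH3b (hess F p)
              \<and> dH1c (hess F p) \<and> dH2c (hess F p) \<and> dH3c (hess F p))"
proof -
  have "\<And>p. (dH1a (hess F p) \<and> dH1b (hess F p) \<and> dH2a (hess F p) \<and> dH2b (hess F p)
              \<and> dH3a (hess F p) \<and> dH3b (hess F p))
     \<longleftrightarrow> (dH1b (hess F p) \<and> dH2b (hess F p) \<and> dH3b (hess F p)
              \<and> dH1c (hess F p) \<and> dH2c (hess F p) \<and> dH3c (hess F p))"
    by (rule hirota_systems_equivalent) (rule hess_symmetric[OF assms])
  thus ?thesis by blast
qed

end
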